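(* For every modal formula $A$: if $\mathsf{BIGL}\models A$ then $\mathsf{PIGL}\models A$.
   Context: Modal formulas: $A ::= p \mid \bot \mid A\wedge A \mid A \vee A \mid A \to A \mid \Box A \mid \Diamond A$ over propositional symbols $\mathsf{Pr}$. Birelational models $\mathcal B=(W,\le,R^{\mathcal B},V)$: nonempty $W$, partial order $\le$, $R^{\mathcal B}\subseteq W^2$ with (F1) $w\le w',wR^{\mathcal B}v\Rightarrow\exists v'(v\le v'\wedge w'R^{\mathcal B}v')$ and (F2) $wR^{\mathcal B}v,v\le v'\Rightarrow\exists w'(w\le w'\wedge w'R^{\mathcal B}v')$, monotone valuation $V:W\to\mathcal P(\mathsf{Pr})$. Satisfaction: $p$ via $V$; $\bot$ never; $\wedge,\vee$ pointwise; $w\models A\to B$ iff every $w'\ge w$ satisfying $A$ satisfies $B$; $w\models\Box A$ iff for all $w'\ge w$ and $v$ with $w'R^{\mathcal B}v$, $v\models A$; $w\models\Diamond A$ iff some $v$ with $wR^{\mathcal B}v$ satisfies $A$. $\mathsf{BIGL}$ is the class of birelational models with $R^{\mathcal B}$ transitive and no infinite chain $x_1\le y_1R^{\mathcal B}x_2\le y_2R^{\mathcal B}x_3\cdots$; $\mathsf{BIGL}\models A$ means every world of every such model satisfies $A$. A Kripke structure $\mathcal K$: a nonempty poset $(W,\le)$; nonempty domains $D_w$ with $D_w\subseteq D_{w'}$ for $w\le w'$; maps $\mathsf{Pr}_w:\mathsf{Pr}\to\mathcal P(D_w)$, monotone in $w$; relations $R_w\subseteq D_w\times D_w$ with $R_w\subseteq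 R_{w'}$ for $w\le w'$. A $w$-environment is $\rho:\mathrm{Var}\to D_w$. $\mathcal K,w\models^\rho x:A$ is defined by: $x:p$ iff $\rho(x)\in\mathsf{Pr}_w(p)$; $\bot$ never; $\wedge,\vee$ pointwise; $x:A\to B$ iff for all $w'\ge w$, $\mathcal K,w'\models^\rho x:A$ implies $\mathcal K,w'\models^\rho x:B$; $x:\Box A$ iff for all $w'\ge w$ and $d\in D_{w'}$ with $\rho(x)R_{w'}d$, $\mathcal K,w'\models^{\rho[y:=d]}y:A$; $x:\Diamond A$ iff there is $d\in D_w$ with $\rho(x)R_wd$ and $\mathcal K,w\models^{\rho[y:=d]}y:A$. With $D_W=\{(w,d):d\in D_w\}$, $(w,d)\le_{D_W}(w',d')$ iff $w\le w'$ and $d=d'$, and $(w,d)R_{D_W}(w',d')$ iff $w=w'$ and $dR_wd'$, $\mathsf{PIGL}$ is the class of Kripke structures with every $R_w$ transitive and no infinite path $(w_1,d_1)\le_{D_W}(w_2,d_1)R_{D_W}(w_2,d_2)\le_{D_W}(w_3,d_2)R_{D_W}\cdots$. $\mathsf{PIGL}\models A$ means $\mathcal K,w\models^\rho x:A$ for all $\mathcal K\in\mathsf{PIGL}$, all worlds $w$, all $w$-environments $\rho$, and all variables $x$. *)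

theory Defs
  imports Main
begin

datatype 'p fm =
    Atom 'p
  | Bot
  | Conj "'p fm" "'p fm"
  | Disj "'p fm" "'p fm"
  | Imp "'p fm" "'p fm"
  | Box "'p fm"
  | Dia "'p fm"

definition no_inf_chain :: "'a set \<Rightarrow> ('a \<Rightarrow> 'a \<Rightarrow> bool) \<Rightarrow> ('a \<Rightarrow> 'a \<Rightarrow> bool) \<Rightarrow> bool" where
  "no_inf_chain S le R \<longleftrightarrow>
     \<not> (\<exists>x y :: nat \<Rightarrow> 'a. (\<forall>i. x i \<in> S \<and> y i \<in> S \<and> le (x i) (y i) \<and> R (y i) (x (Suc i))))"

definition partial_order_on' :: "'a set \<Rightarrow> ('a \<Rightarrow> 'a \<Rightarrow> bool) \<Rightarrow> bool" where
  "partial_order_on' S le \<longleftrightarrow>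
     (\<forall>x\<in>S. le x x) \<and>
     (\<forall>x\<in>S. \<forall>y\<in>S. \<forall>z\<in>S. le x y \<longrightarrow> le y z \<longrightarrow> le x z) \<and>
     (\<forall>x\<in>S. \<forall>y\<in>S. le x y \<longrightarrow> le y x \<longrightarrow> x = y)"

record ('w, 'p) bmodel =
  bW :: "'w set"
  ble :: "'w \<Rightarrow> 'w \<Rightarrow> bool"
  bR :: "'w \<Rightarrow> 'w \<Rightarrow> bool"
  bV :: "'w \<Rightarrow> 'p set"

definition birel_model :: "('w, 'p) bmodel \<Rightarrow> bool" where
  "birel_model B \<longleftrightarrow>
     bW B \<noteq> {} \<and>
     partial_order_on' (bW B) (ble B) \<and>
     (\<forall>w v. bR B w v \<longrightarrow> w \<in> bW B \<and> v \<in> bW B) \<and>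
     (\<forall>w\<in>bW B. \<forall>w'\<in>bW B. \<forall>v\<in>bW B. ble B w w' \<and> bR B w v \<longrightarrow>
        (\<exists>v'\<in>bW B. ble B v v' \<and> bR B w' v')) \<and>
     (\<forall>w\<in>bW B. \<forall>v\<in>bW B. \<forall>v'\<in>bW B. bR B w v \<and> ble B v v' \<longrightarrow>
        (\<exists>w'\<in>bW B. ble B w w' \<and> bR B w' v')) \<and>
     (\<forall>w\<in>bW B. \<forall>w'\<in>bW B. ble B w w' \<longrightarrow> bV B w \<subseteq> bV B w')"

fun bsat :: "('w, 'p) bmodel \<Rightarrow> 'w \<Rightarrow> 'p fm \<Rightarrow> bool" where
  "bsat B w (Atom p) \<longleftrightarrow> p \<in> bV B w"
| "bsat B w Bot \<longleftrightarrow> False"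
| "bsat B w (Conj A C) \<longleftrightarrow> bsat B w A \<and> bsat B w C"
| "bsat B w (Disj A C) \<longleftrightarrow> bsat B w A \<or> bsat B w C"
| "bsat B w (Imp A C) \<longleftrightarrow>
     (\<forall>w'\<in>bW B. ble B w w' \<longrightarrow> bsat B w' A \<longrightarrow> bsat B w' C)"
| "bsat B w (Box A) \<longleftrightarrow>
     (\<forall>w'\<in>bW B. \<forall>v\<in>bW B. ble B w w' \<longrightarrow> bR B w' v \<longrightarrow> bsat B v A)"
| "bsat B w (Dia A) \<longleftrightarrow> (\<exists>v\<in>bW B. bR B w v \<and> bsat B v A)"

definition BIGL :: "('w, 'p) bmodel \<Rightarrow> bool" where
  "BIGL B \<longleftrightarrow> birel_model B \<and>
     (\<forall>x y z. bR B x y \<longrightarrow> bR B y z \<longrightarrow> bR B x z) \<and>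
     no_inf_chain (bW B) (ble B) (bR B)"

definition BIGL_valid :: "'w itself \<Rightarrow> 'p fm \<Rightarrow> bool" where
  "BIGL_valid _ A \<longleftrightarrow> (\<forall>B :: ('w, 'p) bmodel. BIGL B \<longrightarrow> (\<forall>w\<in>bW B. bsat B w A))"

record ('w, 'd, 'p) kstruct =
  kW :: "'w set"
  kle :: "'w \<Rightarrow> 'w \<Rightarrow> bool"
  kD :: "'w \<Rightarrow> 'd set"
  kPr :: "'w \<Rightarrow> 'p \<Rightarrow> 'd set"
  kR :: "'w \<Rightarrow> 'd \<Rightarrow> 'd \<Rightarrow> bool"

definition kripke_struct :: "('w, 'd, 'p) kstruct \<Rightarrow> bool" where
  "kripke_struct K \<longleftrightarrow>
     kW K \<noteq> {} \<and>
     partial_order_on' (kW K) (kle K) \<and>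
     (\<forall>w\<in>kW K. kD K w \<noteq> {}) \<and>
     (\<forall>w\<in>kW K. \<forall>w'\<in>kW K. kle K w w' \<longrightarrow> kD K w \<subseteq> kD K w') \<and>
     (\<forall>w\<in>kW K. \<forall>p. kPr K w p \<subseteq> kD K w) \<and>
     (\<forall>w\<in>kW K. \<forall>w'\<in>kW K. \<forall>p. kle K w w' \<longrightarrow> kPr K w p \<subseteq> kPr K w' p) \<and>
     (\<forall>w\<in>kW K. \<forall>d e. kR K w d e \<longrightarrow> d \<in> kD K w \<and> e \<in> kD K w) \<and>
     (\<forall>w\<in>kW K. \<forall>w'\<in>kW K. \<forall>d e. kle K w w' \<longrightarrow> kR K w d e \<longrightarrow> kR K w' d e)"

text \<open>K, w |=^rho x : A.  In the modal clauses the paper writes rho[y:=d] with y:A;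
  we take y to be x (the value only depends on rho y).\<close>
fun ksat :: "('w, 'd, 'p) kstruct \<Rightarrow> 'w \<Rightarrow> ('v \<Rightarrow> 'd) \<Rightarrow> 'v \<Rightarrow> 'p fm \<Rightarrow> bool" where
  "ksat K w \<rho> x (Atom p) \<longleftrightarrow> \<rho> x \<in> kPr K w p"
| "ksat K w \<rho> x Bot \<longleftrightarrow> False"
| "ksat K w \<rho> x (Conj A C) \<longleftrightarrow> ksat K w \<rho> x A \<and> ksat K w \<rho> x C"
| "ksat K w \<rho> x (Disj A C) \<longleftrightarrow> ksat K w \<rho> x A \<or> ksat K w \<rho> x C"
| "ksat K w \<rho> x (Imp A C) \<longleftrightarrow>
     (\<forall>w'\<in>kW K. kle K w w' \<longrightarrow> ksat K w' \<rho> x A \<longrightarrow> ksat K w' \<rho> x C)"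
| "ksat K w \<rho> x (Box A) \<longleftrightarrow>
     (\<forall>w'\<in>kW K. \<forall>d\<in>kD K w'. kle K w w' \<longrightarrow> kR K w' (\<rho> x) d \<longrightarrow> ksat K w' (\<rho>(x := d)) x A)"
| "ksat K w \<rho> x (Dia A) \<longleftrightarrow>
     (\<exists>d\<in>kD K w. kR K w (\<rho> x) d \<and> ksat K w (\<rho>(x := d)) x A)"

definition DW :: "('w, 'd, 'p) kstruct \<Rightarrow> ('w \<times> 'd) set" where
  "DW K = {(w, d). w \<in> kW K \<and> d \<in> kD K w}"

definition le_DW :: "('w, 'd, 'p) kstruct \<Rightarrow> ('w \<times> 'd) \<Rightarrow> ('w \<times> 'd) \<Rightarrow> bool" where
  "le_DW K a b \<longleftrightarrow> kle K (fst a) (fst b) \<and> snd a = snd b"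

definition R_DW :: "('w, 'd, 'p) kstruct \<Rightarrow> ('w \<times> 'd) \<Rightarrow> ('w \<times> 'd) \<Rightarrow> bool" where
  "R_DW K a b \<longleftrightarrow> fst a = fst b \<and> kR K (fst a) (snd a) (snd b)"

definition PIGL :: "('w, 'd, 'p) kstruct \<Rightarrow> bool" where
  "PIGL K \<longleftrightarrow> kripke_struct K \<and>
     (\<forall>w\<in>kW K. \<forall>x y z. kR K w x y \<longrightarrow> kR K w y z \<longrightarrow> kR K w x z) \<and>
     no_inf_chain (DW K) (le_DW K) (R_DW K)"

definition PIGL_valid :: "'w itself \<Rightarrow> 'd itself \<Rightarrow> 'v itself \<Rightarrow> 'p fm \<Rightarrow> bool" where
  "PIGL_valid _ _ _ A \<longleftrightarrow>
     (\<forall>K :: ('w, 'd, 'p) kstruct. PIGL K \<longrightarrow>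
        (\<forall>w\<in>kW K. \<forall>\<rho> :: 'v \<Rightarrow> 'd. (\<forall>v. \<rho> v \<in> kD K w) \<longrightarrow> (\<forall>x. ksat K w \<rho> x A)))"

end

theory Submission
  imports Defs
begin

text \<open>A Kripke structure K becomes a birelational model on its domain bundle DW K:
  worlds are pairs (w, d) with d in D_w, intuitionistic steps move w and keep d, modal steps
  keep w and follow R_w. Forcing x : A under rho at w is forcing A at (w, rho x), and the
  PIGL conditions on K (transitivity of each R_w, no infinite chain in DW K) are exactly
  the BIGL conditions on this model.\<close>

definition bmodel_of :: "('w, 'd, 'p) kstruct \<Rightarrow> ('w \<times> 'd, 'p) bmodel" where
  "bmodel_of K = \<lparr> bW = DW K, ble = le_DW K,
     bR = (\<lambda>(w, d) (w', e). w \<in> kW K \<and> w' = w \<and> kR K w d e),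
     bV = (\<lambda>(w, d). {p. d \<in> kPr K w p}) \<rparr>"

lemma mem_DW_iff [simp]: "(w, d) \<in> DW K \<longleftrightarrow> w \<in> kW K \<and> d \<in> kD K w"
  by (simp add: DW_def)

lemma le_DW_Pair_iff [simp]: "le_DW K (w, d) (w', d') \<longleftrightarrow> kle K w w' \<and> d = d'"
  by (simp add: le_DW_def)

lemma bmodel_of_simps [simp]:
  "bW (bmodel_of K) = DW K"
  "ble (bmodel_of K) = le_DW K"
  "bR (bmodel_of K) (w, d) (w', e) \<longleftrightarrow> w \<in> kW K \<and> w' = w \<and> kR K w d e"
  "bV (bmodel_of K) (w, d) = {p. d \<in> kPr K w p}"
  by (simp_all add: bmodel_of_def)

lemma bR_bmodel_of_iff:
  "bR (bmodel_of K) a b \<longleftrightarrow> fst a \<in> kW K \<and> fst b = fst a \<and> kR K (fst a) (snd a) (snd b)"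
  by (cases a; cases b) simp

lemma bsat_Dia_bmodel_of:
  "bsat (bmodel_of K) (w, d) (Dia A) \<longleftrightarrow>
    (\<exists>e\<in>kD K w. w \<in> kW K \<and> kR K w d e \<and> bsat (bmodel_of K) (w, e) A)"
proof
  assume "bsat (bmodel_of K) (w, d) (Dia A)"
  then obtain u e where "(u, e) \<in> DW K" "bR (bmodel_of K) (w, d) (u, e)" "bsat (bmodel_of K) (u, e) A"
    by auto
  then show "\<exists>e\<in>kD K w. w \<in> kW K \<and> kR K w d e \<and> bsat (bmodel_of K) (w, e) A"
    by auto
next
  assume "\<exists>e\<in>kD K w. w \<in> kW K \<and> kR K w d e \<and> bsat (bmodel_of K) (w, e) A"
  then show "bsat (bmodel_of K) (w, d) (Dia A)"
    by force
qed

context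
  fixes K :: "('w, 'd, 'p) kstruct"
  assumes K: "kripke_struct K"
begin

lemma kD_mono: "\<lbrakk>w \<in> kW K; w' \<in> kW K; kle K w w'\<rbrakk> \<Longrightarrow> kD K w \<subseteq> kD K w'"
  using K unfolding kripke_struct_def by blast

lemma kR_mono: "\<lbrakk>w \<in> kW K; w' \<in> kW K; kle K w w'; kR K w d e\<rbrakk> \<Longrightarrow> kR K w' d e"
  using K unfolding kripke_struct_def by blast

lemma kPr_mono: "\<lbrakk>w \<in> kW K; w' \<in> kW K; kle K w w'\<rbrakk> \<Longrightarrow> kPr K w p \<subseteq> kPr K w' p"
  using K unfolding kripke_struct_def by blast

lemma kR_in_kD: "\<lbrakk>w \<in> kW K; kR K w d e\<rbrakk> \<Longrightarrow> d \<in> kD K w \<and> e \<in> kD K w"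
  using K unfolding kripke_struct_def by blast

lemma partial_order_DW: "partial_order_on' (DW K) (le_DW K)"
proof -
  have po: "partial_order_on' (kW K) (kle K)"
    using K unfolding kripke_struct_def by blast
  have fst_in: "fst a \<in> kW K" if "a \<in> DW K" for a
    using that by (auto simp: DW_def)
  show ?thesis
    unfolding partial_order_on'_def
  proof (intro conjI ballI impI)
    fix a assume "a \<in> DW K"
    then show "le_DW K a a"
      using po fst_in unfolding partial_order_on'_def le_DW_def by blast
  next
    fix a b c assume "a \<in> DW K" "b \<in> DW K" "c \<in> DW K" "le_DW K a b" "le_DW K b c"
    then show "le_DW K a c"
      using po fst_in unfolding partial_order_on'_def le_DW_def by metis
  next
    fix a b assume "a \<in> DW K" "b \<in> DW K" "le_DW K a b" "le_DW K b a"
    then show "a = b"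
      using po fst_in unfolding partial_order_on'_def le_DW_def by (metis prod.expand)
  qed
qed

lemma birel_model_bmodel_of: "birel_model (bmodel_of K)"
proof -
  let ?R = "bR (bmodel_of K)"
  obtain w d where "w \<in> kW K" "d \<in> kD K w"
    using K by (fastforce simp: kripke_struct_def)
  then have nonempty: "DW K \<noteq> {}"
    by (auto simp: DW_def)
  have R_in_DW: "a \<in> DW K \<and> b \<in> DW K" if "?R a b" for a b
    using that kR_in_kD by (cases a; cases b) auto
  have F1: "\<exists>v'\<in>DW K. le_DW K v v' \<and> ?R w' v'"
    if in_DW: "w' \<in> DW K" and le: "le_DW K w w'" and R: "?R w v" for w w' v
  proof -
    obtain u d u' e where uv: "w = (u, d)" "w' = (u', d)" "v = (u, e)"
      using le R unfolding bR_bmodel_of_iff le_DW_def by (metis prod.collapse)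
    then have "u \<in> kW K" "u' \<in> kW K" "kle K u u'" "kR K u d e"
      using in_DW le R uv by auto
    then have "kR K u' d e" "e \<in> kD K u'"
      using kR_mono kR_in_kD by blast+
    then show ?thesis
      using uv \<open>u' \<in> kW K\<close> \<open>kle K u u'\<close> by (intro bexI[of _ "(u', e)"]) auto
  qed
  have F2: "\<exists>w'\<in>DW K. le_DW K w w' \<and> ?R w' v'"
    if in_DW: "v' \<in> DW K" and R: "?R w v" and le: "le_DW K v v'" for w v v'
  proof -
    obtain u d e u' where uv: "w = (u, d)" "v = (u, e)" "v' = (u', e)"
      using le R unfolding bR_bmodel_of_iff le_DW_def by (metis prod.collapse)
    then have "u \<in> kW K" "u' \<in> kW K" "kle K u u'" "kR K u d e"
      using in_DW le R uv by auto
    then have "kR K u' d e" "d \<in> kD K u'"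
      using kR_mono kR_in_kD kD_mono by blast+
    then show ?thesis
      using uv \<open>u' \<in> kW K\<close> \<open>kle K u u'\<close> by (intro bexI[of _ "(u', d)"]) auto
  qed
  have V_mono: "bV (bmodel_of K) a \<subseteq> bV (bmodel_of K) b"
    if "a \<in> DW K" "b \<in> DW K" "le_DW K a b" for a b
    using that kPr_mono by (auto simp: DW_def le_DW_def bmodel_of_def split_beta)
  show ?thesis
    unfolding birel_model_def bmodel_of_simps(1,2)
    using nonempty partial_order_DW R_in_DW F1 F2 V_mono by (intro conjI) blast+
qed

lemma bsat_Imp_bmodel_of:
  assumes "w \<in> kW K" "d \<in> kD K w"
  shows "bsat (bmodel_of K) (w, d) (Imp A C) \<longleftrightarrow>
    (\<forall>u\<in>kW K. kle K w u \<longrightarrow> bsat (bmodel_of K) (u, d) A \<longrightarrow> bsat (bmodel_of K) (u, d) C)"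
  using assms kD_mono by (auto simp: DW_def le_DW_def)

lemma bsat_Box_bmodel_of:
  assumes "w \<in> kW K" "d \<in> kD K w"
  shows "bsat (bmodel_of K) (w, d) (Box A) \<longleftrightarrow>
    (\<forall>u\<in>kW K. \<forall>e\<in>kD K u. kle K w u \<longrightarrow> kR K u d e \<longrightarrow> bsat (bmodel_of K) (u, e) A)"
  using assms kD_mono by (auto simp: DW_def le_DW_def) blast

end

lemma BIGL_bmodel_of:
  assumes "PIGL K"
  shows "BIGL (bmodel_of K)"
proof -
  have K: "kripke_struct K" and trans: "\<forall>w\<in>kW K. \<forall>x y z. kR K w x y \<longrightarrow> kR K w y z \<longrightarrow> kR K w x z"
    and chains: "no_inf_chain (DW K) (le_DW K) (R_DW K)"
    using assms by (simp_all add: PIGL_def)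
  have "R_DW K a b" if "bR (bmodel_of K) a b" for a b
    using that by (simp add: R_DW_def bR_bmodel_of_iff)
  then have "no_inf_chain (DW K) (le_DW K) (bR (bmodel_of K))"
    using chains unfolding no_inf_chain_def by blast
  moreover have "\<forall>a b c. bR (bmodel_of K) a b \<longrightarrow> bR (bmodel_of K) b c \<longrightarrow> bR (bmodel_of K) a c"
    using trans unfolding bR_bmodel_of_iff by metis
  ultimately show ?thesis
    using birel_model_bmodel_of[OF K] unfolding BIGL_def bmodel_of_simps(1,2) by (intro conjI)
qed

lemma ksat_iff_bsat_bmodel_of:
  assumes K: "kripke_struct K" and "w \<in> kW K" "\<rho> x \<in> kD K w"
  shows "ksat K w \<rho> x A \<longleftrightarrow> bsat (bmodel_of K) (w, \<rho> x) A"
  using assms(2,3)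
proof (induction A arbitrary: w \<rho>)
  case (Imp A C)
  then have "\<rho> x \<in> kD K u" if "u \<in> kW K" "kle K w u" for u
    using that kD_mono[OF K] by blast
  with Imp show ?case
    unfolding ksat.simps bsat_Imp_bmodel_of[OF K Imp.prems] by blast
next
  case (Box A)
  have "ksat K u (\<rho>(x := d)) x A \<longleftrightarrow> bsat (bmodel_of K) (u, d) A" if "u \<in> kW K" "d \<in> kD K u" for u d
    using Box.IH[of u "\<rho>(x := d)"] that by (simp add: fun_upd_def)
  then show ?case
    unfolding ksat.simps bsat_Box_bmodel_of[OF K Box.prems] by auto
next
  case (Dia A)
  have "ksat K w (\<rho>(x := d)) x A \<longleftrightarrow> bsat (bmodel_of K) (w, d) A" if "d \<in> kD K w" for d
    using Dia.IH[of w "\<rho>(x := d)"] Dia.prems that by (simp add: fun_upd_def)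
  with Dia.prems show ?case
    unfolding ksat.simps bsat_Dia_bmodel_of by auto
qed auto

theorem mainTheorem7:
  fixes A :: "'p fm"
  assumes "BIGL_valid TYPE('w \<times> 'd) A"
  shows "PIGL_valid TYPE('w) TYPE('d) TYPE('v) A"
  unfolding PIGL_valid_def
proof (intro allI impI ballI)
  fix K :: "('w, 'd, 'p) kstruct" and w and \<rho> :: "'v \<Rightarrow> 'd" and x
  assume K: "PIGL K" and w: "w \<in> kW K" and \<rho>: "\<forall>v. \<rho> v \<in> kD K w"
  then have "(w, \<rho> x) \<in> bW (bmodel_of K)"
    by (simp add: DW_def)
  then have "bsat (bmodel_of K) (w, \<rho> x) A"
    using assms BIGL_bmodel_of[OF K] unfolding BIGL_valid_def by blast
  moreover have "kripke_struct K"
    using K unfolding PIGL_def by blast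
  ultimately show "ksat K w \<rho> x A"
    using ksat_iff_bsat_bmodel_of[of K w \<rho> x A] w \<rho> by simp
qed

end
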